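(* For all $k\in\mathbb N$ and $\mu\in\{1,\dots,L\}$, $$f(v_{k,\mu})=-\frac{1}{2\|b\|^2}\langle v_{k,\mu},b\rangle=-\frac{1}{2\|b\|^2}\|v_{k,\mu}\|_A^2,$$ where $\|v\|_A=\sqrt{\langle Av,v\rangle}$.
   Context: Let $\mathcal V=\bigotimes_{\nu=1}^d\mathbb R^{m_\nu}\cong\mathbb R^N$ with the Euclidean inner product $\langle\cdot,\cdot\rangle$. Let $A\in\mathbb R^{N\times N}$ be symmetric positive definite, $b\in\mathcal V\setminus\{0\}$, $f(v)=\frac{1}{\|b\|^2}(\frac12\langle Av,v\rangle-\langle b,v\rangle)$. Let $L\ge d$, $P_1,\dots,P_L$ finite-dimensional real inner product spaces, $P=P_1\times\dots\times P_L$, $U:P\to\mathcal V$ multilinear. For $\mathbf p\in P$, $W_{\mu,\mathbf p^{[\mu]}}:P_\mu\to\mathcal V$ is $q\mapsto U(p_1,\dots,p_{\mu-1},q,p_{\mu+1},\dots,p_L)$; $X^T$ transpose, $X^+$ pseudoinverse. ALS: choose $\mathbf p_1=(p_1^1,\dots,p_L^1)\in P$; for $k=1,2,\dots$ and $\mu=1,\dots,L$ in order, $W_{k,\mu}:=W_{\mu,(p_1^{k+1},\dots,p_{\mu-1}^{k+1},p_{\mu+1}^k,\dots,p_L^k)}$ and $p_\mu^{k+1}:=(W_{k,\mu}^TAW_{k,\mu})^+W_{k,\mu}^Tb$. For $\mu\in\{0,\dots,L\}$ put $v_{k,\mu}=U(p_1^{k+1},\dots,p_\mu^{k+1},p_{\mu+1}^k,\dots,p_L^k)$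 (the iterate after the first $\mu$ updates of sweep $k$). *)

theory Defs
  imports Complex_Main "Jordan_Normal_Form.Matrix"
begin

text \<open>Vectors of V = R^N and of the parameter spaces P_mu = R^(n mu) are
  Jordan_Normal_Form vectors (real vec) with the standard (Euclidean) inner product.
  A parameter tuple p = (p_1,...,p_L) is a list of length L; the paper's index mu in
  1..L corresponds to the list position mu - 1.\<close>

definition is_param :: "nat \<Rightarrow> (nat \<Rightarrow> nat) \<Rightarrow> real vec list \<Rightarrow> bool" where
  "is_param L n ps \<longleftrightarrow> length ps = L \<and> (\<forall>i<L. ps ! i \<in> carrier_vec (n i))"

definition multilinear_map ::
  "nat \<Rightarrow> (nat \<Rightarrow> nat) \<Rightarrow> nat \<Rightarrow> (real vec list \<Rightarrow> real vec) \<Rightarrow> bool" where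
  "multilinear_map L n N U \<longleftrightarrow>
     (\<forall>ps. is_param L n ps \<longrightarrow> U ps \<in> carrier_vec N) \<and>
     (\<forall>ps i x y a. is_param L n ps \<longrightarrow> i < L \<longrightarrow> x \<in> carrier_vec (n i) \<longrightarrow> y \<in> carrier_vec (n i) \<longrightarrow>
        U (ps[i := a \<cdot>\<^sub>v x + y]) = a \<cdot>\<^sub>v U (ps[i := x]) + U (ps[i := y]))"

text \<open>Matrix of the linear map W_{mu,p^[mu]} : q \<mapsto> U(p_1,..,q,..,p_L) (slot i = mu - 1).\<close>
definition Wmat :: "(real vec list \<Rightarrow> real vec) \<Rightarrow> (nat \<Rightarrow> nat) \<Rightarrow> nat \<Rightarrow> real vec list \<Rightarrow> nat \<Rightarrow> real mat" where
  "Wmat U n N ps i = mat N (n i) (\<lambda>(r, c). U (ps[i := unit_vec (n i) c]) $ r)"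

definition pinv :: "real mat \<Rightarrow> real mat" where
  "pinv M = (THE X. X \<in> carrier_mat (dim_col M) (dim_row M) \<and> M * X * M = M \<and> X * M * X = X \<and>
                    transpose_mat (M * X) = M * X \<and> transpose_mat (X * M) = X * M)"

definition als_update :: "(real vec list \<Rightarrow> real vec) \<Rightarrow> (nat \<Rightarrow> nat) \<Rightarrow> nat \<Rightarrow> real mat \<Rightarrow> real vec
     \<Rightarrow> real vec list \<Rightarrow> nat \<Rightarrow> real vec list" where
  "als_update U n N A b ps i =
     (let W = Wmat U n N ps i in ps[i := pinv (transpose_mat W * A * W) *\<^sub>v (transpose_mat W *\<^sub>v b)])"

fun partial_sweep :: "(real vec list \<Rightarrow> real vec) \<Rightarrow> (nat \<Rightarrow> nat) \<Rightarrow> nat \<Rightarrow> real mat \<Rightarrow> real vec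
     \<Rightarrow> real vec list \<Rightarrow> nat \<Rightarrow> real vec list" where
  "partial_sweep U n N A b ps 0 = ps"
| "partial_sweep U n N A b ps (Suc m) = als_update U n N A b (partial_sweep U n N A b ps m) m"

text \<open>als_param ... p1 k = p^k (the tuple at the start of sweep k), for k \<ge> 1; p^1 = p1.\<close>
definition als_param :: "nat \<Rightarrow> (real vec list \<Rightarrow> real vec) \<Rightarrow> (nat \<Rightarrow> nat) \<Rightarrow> nat \<Rightarrow> real mat \<Rightarrow> real vec
     \<Rightarrow> real vec list \<Rightarrow> nat \<Rightarrow> real vec list" where
  "als_param L U n N A b p1 k = ((\<lambda>ps. partial_sweep U n N A b ps L) ^^ (k - 1)) p1"

definition als_iterate :: "nat \<Rightarrow> (real vec list \<Rightarrow> real vec) \<Rightarrow> (nat \<Rightarrow> nat) \<Rightarrow> nat \<Rightarrow> real mat \<Rightarrow> real vec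
     \<Rightarrow> real vec list \<Rightarrow> nat \<Rightarrow> nat \<Rightarrow> real vec" where
  "als_iterate L U n N A b p1 k \<mu> = U (partial_sweep U n N A b (als_param L U n N A b p1 k) \<mu>)"

definition energy :: "real mat \<Rightarrow> real vec \<Rightarrow> real vec \<Rightarrow> real" where
  "energy A b v = (1 / (b \<bullet> b)) * ((1/2) * ((A *\<^sub>v v) \<bullet> v) - b \<bullet> v)"

definition A_norm :: "real mat \<Rightarrow> real vec \<Rightarrow> real" where
  "A_norm A v = sqrt ((A *\<^sub>v v) \<bullet> v)"

end

theory Submission
  imports Defs
begin

text \<open>Each ALS micro-step is a Galerkin projection: with W the matrix of the linear map
  q \<mapsto> U(..., q, ...), M = W^T A W and Z the pseudoinverse of M, the new iterate is
  v = W Z W^T b. Since M is symmetric, so is Z, and Z M Z = Z; hence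
  \<langle>A v, v\<rangle> = y^T Z M Z y = y^T Z y = \<langle>v, b\<rangle> with y = W^T b, and both identities
  follow by substituting this into the energy. The only nontrivial ingredient is the existence
  of the Moore-Penrose inverse, obtained by building an orthogonal projection onto the range
  of M column by column.\<close>

definition moore_penrose :: "real mat \<Rightarrow> real mat \<Rightarrow> bool" where
  "moore_penrose M X \<longleftrightarrow> X \<in> carrier_mat (dim_col M) (dim_row M) \<and> M * X * M = M \<and>
     X * M * X = X \<and> (M * X)\<^sup>T = M * X \<and> (X * M)\<^sup>T = X * M"

lemma moore_penrose_mult_eq:
  assumes M: "M \<in> carrier_mat n m" and X: "moore_penrose M X" and Y: "moore_penrose M Y"
  shows "M * X = M * Y" "X * M = Y * M"
proof -
  have Xc: "X \<in> carrier_mat m n" and Yc: "Y \<in> carrier_mat m n" using X Y M unfolding moore_penrose_def by auto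
  note c = M Xc Yc
  have x1: "M * X * M = M" and x3: "(M * X)\<^sup>T = M * X" and x4: "(X * M)\<^sup>T = X * M"
    using X unfolding moore_penrose_def by auto
  have y1: "M * Y * M = M" and y3: "(M * Y)\<^sup>T = M * Y" and y4: "(Y * M)\<^sup>T = Y * M"
    using Y unfolding moore_penrose_def by auto
  have MT: "M\<^sup>T \<in> carrier_mat m n" "X\<^sup>T \<in> carrier_mat n m" "Y\<^sup>T \<in> carrier_mat n m" using c by auto
  have tMX: "(M * X)\<^sup>T = X\<^sup>T * M\<^sup>T" and tMY: "(M * Y)\<^sup>T = Y\<^sup>T * M\<^sup>T"
     and tXM: "(X * M)\<^sup>T = M\<^sup>T * X\<^sup>T" and tYM: "(Y * M)\<^sup>T = M\<^sup>T * Y\<^sup>T"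
    using transpose_mult c by blast+
  have "X\<^sup>T * M\<^sup>T = X\<^sup>T * (M\<^sup>T * (Y\<^sup>T * M\<^sup>T))"
    using y1 transpose_mult[of "M*Y" n n M m] c tMY by auto
  also have "\<dots> = (X\<^sup>T * M\<^sup>T) * (Y\<^sup>T * M\<^sup>T)"
    by (rule assoc_mult_mat[of "X\<^sup>T" n m "M\<^sup>T" n "Y\<^sup>T * M\<^sup>T" n, symmetric]) (use MT in auto)
  also have "\<dots> = (M * X) * (M * Y)" using x3 y3 tMX tMY by simp
  also have "\<dots> = (M * X * M) * Y" using assoc_mult_mat[of "M * X" n n M m Y n] c by simp
  finally show "M * X = M * Y" using x1 x3 tMX by simp
  have "M\<^sup>T * Y\<^sup>T = (M\<^sup>T * (X\<^sup>T * M\<^sup>T)) * Y\<^sup>T"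
    using x1 transpose_mult[of "M*X" n n M m] c tMX by auto
  also have "M\<^sup>T * (X\<^sup>T * M\<^sup>T) = (M\<^sup>T * X\<^sup>T) * M\<^sup>T"
    by (rule assoc_mult_mat[of "M\<^sup>T" m n "X\<^sup>T" m "M\<^sup>T" n, symmetric]) (use MT in auto)
  also have "(M\<^sup>T * X\<^sup>T) * M\<^sup>T * Y\<^sup>T = (M\<^sup>T * X\<^sup>T) * (M\<^sup>T * Y\<^sup>T)"
    by (rule assoc_mult_mat[of "M\<^sup>T * X\<^sup>T" m m "M\<^sup>T" n "Y\<^sup>T" m]) (use MT in auto)
  also have "\<dots> = (X * M) * (Y * M)" using x4 y4 tXM tYM by simp
  also have "\<dots> = X * (M * (Y * M))" by (rule assoc_mult_mat[of X m n M m "Y * M" m]) (use c in auto)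
  also have "M * (Y * M) = M * Y * M" by (rule assoc_mult_mat[of M n m Y n M m, symmetric]) (use c in auto)
  finally show "X * M = Y * M" using y1 y4 tYM by simp
qed

lemma moore_penrose_unique:
  assumes M: "M \<in> carrier_mat n m" and X: "moore_penrose M X" and Y: "moore_penrose M Y"
  shows "X = Y"
proof -
  have Xc: "X \<in> carrier_mat m n" and Yc: "Y \<in> carrier_mat m n" using X Y M unfolding moore_penrose_def by auto
  note eqs = moore_penrose_mult_eq[OF M X Y]
  have "X = X * (M * X)" using X Xc M unfolding moore_penrose_def by simp
  also have "\<dots> = (Y * M) * Y" using eqs Xc Yc M by (simp add: assoc_mult_mat[of X m n M m Y n, symmetric])
  also have "\<dots> = Y" using Y unfolding moore_penrose_def by simp
  finally show ?thesis .
qed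

lemma pinv_moore_penrose:
  assumes "M \<in> carrier_mat n m" and "moore_penrose M X"
  shows "moore_penrose M (pinv M)"
  using theI[of "moore_penrose M" X] moore_penrose_unique assms
  unfolding pinv_def moore_penrose_def[symmetric] by blast

definition outer :: "real vec \<Rightarrow> real vec \<Rightarrow> real mat" where
  "outer u v = mat (dim_vec u) (dim_vec v) (\<lambda>(i,j). u$i * v$j)"

lemma outer_carrier[simp]: "outer u v \<in> carrier_mat (dim_vec u) (dim_vec v)"
  unfolding outer_def by auto

lemma outer_mult_vec: assumes "dim_vec w = dim_vec v" shows "outer u v *\<^sub>v w = (v \<bullet> w) \<cdot>\<^sub>v u"
proof (rule eq_vecI)
  fix i assume "i < dim_vec ((v \<bullet> w) \<cdot>\<^sub>v u)"
  then have i: "i < dim_vec u" by simp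
  have "(outer u v *\<^sub>v w) $ i = (\<Sum>j<dim_vec v. u$i * v$j * w$j)"
    using i assms unfolding outer_def mult_mat_vec_def scalar_prod_def row_def
    by (auto simp: atLeast0LessThan)
  also have "\<dots> = u$i * (v \<bullet> w)" unfolding scalar_prod_def using assms
    by (simp add: sum_distrib_left atLeast0LessThan mult.assoc)
  finally show "(outer u v *\<^sub>v w) $ i = ((v \<bullet> w) \<cdot>\<^sub>v u) $ i" using i by simp
qed (auto simp: outer_def)

lemma smult_mat_mult_vec: "dim_vec x = dim_col A \<Longrightarrow> (a \<cdot>\<^sub>m A) *\<^sub>v x = a \<cdot>\<^sub>v (A *\<^sub>v x)"
  by (rule eq_vecI) (auto simp: mult_mat_vec_def scalar_prod_def sum_distrib_left mult.assoc intro!: sum.cong)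

lemma mult_rank_one_update_mult_vec:
  fixes M X :: "real mat"
  assumes M: "M \<in> carrier_mat nr nc" and X: "X \<in> carrier_mat nc nr"
    and e: "e \<in> carrier_vec nc" and u: "u \<in> carrier_vec nr" and x: "x \<in> carrier_vec nr"
  shows "(M * (X + a \<cdot>\<^sub>m outer e u)) *\<^sub>v x = (M * X) *\<^sub>v x + (a * (u \<bullet> x)) \<cdot>\<^sub>v (M *\<^sub>v e)"
proof -
  have oc: "outer e u \<in> carrier_mat nc nr" using outer_carrier[of e u] e u by auto
  have "(X + a \<cdot>\<^sub>m outer e u) *\<^sub>v x = X *\<^sub>v x + (a * (u \<bullet> x)) \<cdot>\<^sub>v e"
    using X oc x u
    by (simp add: add_mult_distrib_mat_vec[OF X] smult_mat_mult_vec outer_mult_vec smult_smult_assoc)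
  moreover have "X + a \<cdot>\<^sub>m outer e u \<in> carrier_mat nc nr" using X oc by auto
  ultimately show ?thesis using M X x e
    by (simp add: mult_add_distrib_mat_vec[OF M] mult_mat_vec[OF M])
qed

lemma scalar_prod_self_pos:
  fixes u :: "real vec" assumes u: "u \<in> carrier_vec n" "u \<noteq> 0\<^sub>v n"
  shows "u \<bullet> u > 0"
proof -
  obtain i where i: "i < n" "u $ i \<noteq> 0" using u by (metis carrier_vecD eq_vecI index_zero_vec(1) index_zero_vec(2))
  have "u \<bullet> u = (\<Sum>j\<in>{0..<n}. u$j * u$j)" unfolding scalar_prod_def using u by simp
  also have "\<dots> > 0" by (rule sum_pos2[of _ i]) (use i in \<open>auto simp: zero_less_mult_iff\<close>)
  finally show ?thesis .
qed

lemma zero_mat_mult_vec[simp]: "x \<in> carrier_vec nc \<Longrightarrow> 0\<^sub>m nr nc *\<^sub>v x = 0\<^sub>v nr"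
  by (intro eq_vecI) (auto simp: scalar_prod_def)

definition orth_projection_mat :: "nat \<Rightarrow> real mat \<Rightarrow> bool" where
  "orth_projection_mat n P \<longleftrightarrow> P \<in> carrier_mat n n \<and>
     (\<forall>x\<in>carrier_vec n. \<forall>y\<in>carrier_vec n. (P *\<^sub>v x) \<bullet> y = x \<bullet> (P *\<^sub>v y)) \<and>
     (\<forall>x\<in>carrier_vec n. P *\<^sub>v (P *\<^sub>v x) = P *\<^sub>v x)"

lemma orth_projection_add_rank_one:
  fixes P Q :: "real mat"
  assumes P: "orth_projection_mat n P" and Q: "Q \<in> carrier_mat n n"
    and u: "u \<in> carrier_vec n" "u \<noteq> 0\<^sub>v n" and Pu: "P *\<^sub>v u = 0\<^sub>v n"
    and Qx: "\<And>x. x \<in> carrier_vec n \<Longrightarrow> Q *\<^sub>v x = P *\<^sub>v x + ((u \<bullet> x) / (u \<bullet> u)) \<cdot>\<^sub>v u"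
  shows "orth_projection_mat n Q"
proof -
  have Pc: "P \<in> carrier_mat n n" using P unfolding orth_projection_mat_def by blast
  have uu: "u \<bullet> u \<noteq> 0" using scalar_prod_self_pos[OF u] by simp
  have Psym: "(P *\<^sub>v x) \<bullet> y = x \<bullet> (P *\<^sub>v y)" if "x \<in> carrier_vec n" "y \<in> carrier_vec n" for x y
    using P that unfolding orth_projection_mat_def by blast
  have Pidem: "P *\<^sub>v (P *\<^sub>v x) = P *\<^sub>v x" if "x \<in> carrier_vec n" for x
    using P that unfolding orth_projection_mat_def by blast
  have u_orth: "u \<bullet> (P *\<^sub>v x) = 0" if "x \<in> carrier_vec n" for x
    using Psym[OF u(1) that] Pu that by simp
  show ?thesis unfolding orth_projection_mat_def
  proof (intro conjI ballI Q)
    fix x y :: "real vec" assume x: "x \<in> carrier_vec n" and y: "y \<in> carrier_vec n"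
    have "(Q *\<^sub>v x) \<bullet> y = (P *\<^sub>v x) \<bullet> y + (u \<bullet> x) * (u \<bullet> y) / (u \<bullet> u)"
      using Qx[OF x] x y u Pc by (simp add: add_scalar_prod_distrib[of _ n])
    also have "\<dots> = x \<bullet> (P *\<^sub>v y) + (u \<bullet> y) * (x \<bullet> u) / (u \<bullet> u)"
      using Psym[OF x y] comm_scalar_prod[OF u(1) x] by simp
    also have "\<dots> = x \<bullet> (Q *\<^sub>v y)"
      using Qx[OF y] x y u Pc by (simp add: scalar_prod_add_distrib[of _ n])
    finally show "(Q *\<^sub>v x) \<bullet> y = x \<bullet> (Q *\<^sub>v y)" .
  next
    fix x :: "real vec" assume x: "x \<in> carrier_vec n"
    define \<beta> where "\<beta> = (u \<bullet> x) / (u \<bullet> u)"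
    have Qxc: "Q *\<^sub>v x \<in> carrier_vec n" using Q x by auto
    have "\<beta> \<cdot>\<^sub>v 0\<^sub>v n = (0\<^sub>v n :: real vec)" by (intro eq_vecI) auto
    then have "P *\<^sub>v (Q *\<^sub>v x) = P *\<^sub>v x"
      using Qx[OF x] Pc u x Pu Pidem[OF x]
      by (simp add: mult_add_distrib_mat_vec[OF Pc] mult_mat_vec[OF Pc] \<beta>_def)
    moreover have "u \<bullet> (Q *\<^sub>v x) = u \<bullet> x"
      using Qx[OF x] u x Pc u_orth[OF x] uu by (simp add: scalar_prod_add_distrib[of _ n])
    ultimately show "Q *\<^sub>v (Q *\<^sub>v x) = Q *\<^sub>v x" using Qx[OF Qxc] Qx[OF x] by simp
  qed
qed

text \<open>The residual u of M e against the range of M X is orthogonal to that range; the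
  rank-one update of X by e - X (M e) adds the orthogonal projection onto u.\<close>
lemma orth_projection_extend:
  fixes M X :: "real mat"
  assumes M: "M \<in> carrier_mat nr nc" and X: "X \<in> carrier_mat nc nr"
    and P: "orth_projection_mat nr (M * X)" and e: "e \<in> carrier_vec nc"
  obtains X' where "X' \<in> carrier_mat nc nr" "orth_projection_mat nr (M * X')"
    "\<And>y. y \<in> carrier_vec nr \<Longrightarrow> (M * X) *\<^sub>v y = y \<Longrightarrow> (M * X') *\<^sub>v y = y"
    "(M * X') *\<^sub>v (M *\<^sub>v e) = M *\<^sub>v e"
proof -
  define P where "P = M * X"
  have Pc: "P \<in> carrier_mat nr nr" unfolding P_def using M X by auto
  define c where "c = M *\<^sub>v e"
  have c: "c \<in> carrier_vec nr" unfolding c_def using M e by auto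
  define u where "u = c - P *\<^sub>v c"
  have u: "u \<in> carrier_vec nr" unfolding u_def using c Pc by auto
  have c_split: "c = u + P *\<^sub>v c" unfolding u_def using c Pc by (intro eq_vecI) auto
  have Psym: "(P *\<^sub>v x) \<bullet> y = x \<bullet> (P *\<^sub>v y)" if "x \<in> carrier_vec nr" "y \<in> carrier_vec nr" for x y
    using P that unfolding P_def orth_projection_mat_def by blast
  have Pu: "P *\<^sub>v u = 0\<^sub>v nr"
    using P c Pc unfolding u_def P_def orth_projection_mat_def
    by (simp add: mult_minus_distrib_mat_vec[of "M * X" nr nr])
  have u_orth: "u \<bullet> (P *\<^sub>v y) = 0" if "y \<in> carrier_vec nr" for y
    using Psym[OF u that] Pu that by simp
  show ?thesis
  proof (cases "u = 0\<^sub>v nr")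
    case True
    then show ?thesis using that[OF X P] c_split c Pc unfolding P_def c_def by auto
  next
    case False
    define e' where "e' = e - X *\<^sub>v c"
    have e': "e' \<in> carrier_vec nc" unfolding e'_def using X c e by auto
    have Me': "M *\<^sub>v e' = u"
      unfolding e'_def u_def P_def c_def using M X c e by (simp add: mult_minus_distrib_mat_vec[OF M])
    define X' where "X' = X + (1 / (u \<bullet> u)) \<cdot>\<^sub>m outer e' u"
    have oc: "outer e' u \<in> carrier_mat nc nr" using outer_carrier[of e' u] e' u by auto
    have X': "X' \<in> carrier_mat nc nr" unfolding X'_def using X oc by auto
    have P'x: "(M * X') *\<^sub>v x = P *\<^sub>v x + ((u \<bullet> x) / (u \<bullet> u)) \<cdot>\<^sub>v u" if "x \<in> carrier_vec nr" for x
      using mult_rank_one_update_mult_vec[OF M X e' u that] Me' unfolding X'_def P_def by simp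
    have uu: "u \<bullet> u \<noteq> 0" using scalar_prod_self_pos[OF u False] by simp
    show ?thesis
    proof (rule that[OF X'])
      show "orth_projection_mat nr (M * X')"
        using orth_projection_add_rank_one[OF P _ u False] Pu P'x M X' unfolding P_def by auto
    next
      fix y :: "real vec" assume y: "y \<in> carrier_vec nr" and Py: "(M * X) *\<^sub>v y = y"
      have "u \<bullet> y = 0" using u_orth[OF y] Py unfolding P_def by simp
      then have "(M * X') *\<^sub>v y = y + 0 \<cdot>\<^sub>v u" using P'x[OF y] Py unfolding P_def by simp
      also have "\<dots> = y" using y u by (intro eq_vecI) auto
      finally show "(M * X') *\<^sub>v y = y" .
    next
      have "u \<bullet> c = u \<bullet> u" using c_split u c Pc u_orth[OF c]
        by (metis add.right_neutral mult_mat_vec_carrier scalar_prod_add_distrib)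
      then have "(M * X') *\<^sub>v c = P *\<^sub>v c + u" using P'x[OF c] uu by simp
      also have "\<dots> = c" unfolding u_def using c Pc by (intro eq_vecI) auto
      finally show "(M * X') *\<^sub>v (M *\<^sub>v e) = M *\<^sub>v e" unfolding c_def .
    qed
  qed
qed

lemma orth_projection_onto_range_exists:
  fixes M :: "real mat" assumes M: "M \<in> carrier_mat nr nc"
  obtains X where "X \<in> carrier_mat nc nr" "orth_projection_mat nr (M * X)" "M * X * M = M"
proof -
  have "k \<le> nc \<Longrightarrow> \<exists>X \<in> carrier_mat nc nr. orth_projection_mat nr (M * X) \<and>
          (\<forall>j<k. (M * X) *\<^sub>v col M j = col M j)" for k
  proof (induction k)
    case 0
    have "orth_projection_mat nr (M * 0\<^sub>m nc nr)"
      unfolding orth_projection_mat_def using M by auto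
    then show ?case by auto
  next
    case (Suc k)
    then obtain X where X: "X \<in> carrier_mat nc nr" "orth_projection_mat nr (M * X)"
      and fixed: "\<forall>j<k. (M * X) *\<^sub>v col M j = col M j" by auto
    obtain X' where X': "X' \<in> carrier_mat nc nr" "orth_projection_mat nr (M * X')"
      and keep: "\<And>y. y \<in> carrier_vec nr \<Longrightarrow> (M * X) *\<^sub>v y = y \<Longrightarrow> (M * X') *\<^sub>v y = y"
      and new: "(M * X') *\<^sub>v (M *\<^sub>v unit_vec nc k) = M *\<^sub>v unit_vec nc k"
      by (rule orth_projection_extend[OF M X, of "unit_vec nc k"]) auto
    have "M *\<^sub>v unit_vec nc k = col M k" using M Suc.prems by (intro eq_vecI) auto
    then have "\<forall>j<Suc k. (M * X') *\<^sub>v col M j = col M j"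
      using keep fixed new M by (auto simp: less_Suc_eq simp del: assoc_mult_mat_vec)
    with X' show ?case by blast
  qed
  then obtain X where X: "X \<in> carrier_mat nc nr" "orth_projection_mat nr (M * X)"
    and fixed: "\<forall>j<nc. (M * X) *\<^sub>v col M j = col M j" by blast
  have "M * X * M = M"
  proof (rule mat_col_eqI)
    fix j assume "j < dim_col M"
    then show "col (M * X * M) j = col M j" using M X fixed col_mult2[of "M * X" nr nr M nc j] by auto
  qed (use M X in auto)
  with X that show ?thesis by blast
qed

lemma eq_vec_by_scalar_prod:
  fixes x :: "real vec" assumes "x \<in> carrier_vec n" "y \<in> carrier_vec n"
    and "\<And>z. z \<in> carrier_vec n \<Longrightarrow> x \<bullet> z = y \<bullet> z"
  shows "x = y"
proof (rule eq_vecI)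
  fix i assume "i < dim_vec y" then have i: "i < n" using assms by auto
  show "x $ i = y $ i" using assms(3)[of "unit_vec n i"] i assms(1,2) by simp
qed (use assms in auto)

lemma eq_mat_by_mult_vec:
  fixes A :: "real mat" assumes A: "A \<in> carrier_mat nr nc" and B: "B \<in> carrier_mat nr nc"
    and "\<And>x. x \<in> carrier_vec nc \<Longrightarrow> A *\<^sub>v x = B *\<^sub>v x"
  shows "A = B"
proof (rule mat_col_eqI)
  fix j assume "j < dim_col B" then have j: "j < nc" using B by auto
  have "col C j = C *\<^sub>v unit_vec nc j" if "C \<in> carrier_mat nr nc" for C :: "real mat"
    using that j by (intro eq_vecI) auto
  then show "col A j = col B j" using assms(3)[of "unit_vec nc j"] A B by simp
qed (use A B in auto)

lemma orth_projection_mat_transpose: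
  assumes P: "orth_projection_mat n P"
  shows "P\<^sup>T = P"
proof -
  have Pc: "P \<in> carrier_mat n n"
    and Psym: "\<And>x y. x \<in> carrier_vec n \<Longrightarrow> y \<in> carrier_vec n \<Longrightarrow> (P *\<^sub>v x) \<bullet> y = x \<bullet> (P *\<^sub>v y)"
    using P unfolding orth_projection_mat_def by auto
  show ?thesis
  proof (rule eq_mat_by_mult_vec[of _ n n])
    fix x :: "real vec" assume x: "x \<in> carrier_vec n"
    show "P\<^sup>T *\<^sub>v x = P *\<^sub>v x"
    proof (rule eq_vec_by_scalar_prod[of _ n])
      fix z :: "real vec" assume z: "z \<in> carrier_vec n"
      have "(P\<^sup>T *\<^sub>v x) \<bullet> z = x \<bullet> (P *\<^sub>v z)" using transpose_vec_mult_scalar[OF Pc z x] .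
      also have "\<dots> = (P *\<^sub>v x) \<bullet> z" using Psym[OF x z] by simp
      finally show "(P\<^sup>T *\<^sub>v x) \<bullet> z = (P *\<^sub>v x) \<bullet> z" .
    qed (use x Pc in auto)
  qed (use Pc in auto)
qed

text \<open>With P = M X the orthogonal projection onto the range of the symmetric matrix M,
  Z = X^T M X satisfies M Z = Z M = P.\<close>
lemma moore_penrose_exists_symmetric:
  fixes M :: "real mat" assumes M: "M \<in> carrier_mat n n" and S: "M\<^sup>T = M"
  shows "\<exists>Z. moore_penrose M Z"
proof -
  obtain X where X: "X \<in> carrier_mat n n" and P: "orth_projection_mat n (M * X)" and MXM: "M * X * M = M"
    by (rule orth_projection_onto_range_exists[OF M])
  have as: "\<And>A B C. A \<in> carrier_mat n n \<Longrightarrow> B \<in> carrier_mat n n \<Longrightarrow> C \<in> carrier_mat n n \<Longrightarrow> A * B * C = A * (B * C)"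
    by (rule assoc_mult_mat)
  have XT: "X\<^sup>T \<in> carrier_mat n n" using X by auto
  have MX: "M * X \<in> carrier_mat n n" using M X by auto
  have XTM: "X\<^sup>T * M \<in> carrier_mat n n" using M X by auto
  have XM: "X * M \<in> carrier_mat n n" using M X by auto
  have PT: "(M * X)\<^sup>T = M * X" by (rule orth_projection_mat_transpose[OF P])
  have F1: "X\<^sup>T * M = M * X"
    using PT transpose_mult[OF M X] S by simp
  have F2: "M * (X\<^sup>T * M) = M"
  proof -
    have "(M * X * M)\<^sup>T = M\<^sup>T * (M * X)\<^sup>T" using transpose_mult[OF MX M] .
    also have "\<dots> = M * (X\<^sup>T * M)" using S F1 PT by simp
    finally show ?thesis using MXM S by simp
  qed
  define Z where "Z = X\<^sup>T * M * X"
  have Z: "Z \<in> carrier_mat n n" unfolding Z_def using X M by auto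
  have MZ: "M * Z = M * X"
  proof -
    have "M * Z = M * (X\<^sup>T * M) * X" unfolding Z_def using as[OF M XTM X] by simp
    thus ?thesis using F2 by simp
  qed
  have ZM: "Z * M = M * X"
  proof -
    have "Z * M = (X\<^sup>T * M) * (X * M)" unfolding Z_def using as[OF XTM X M] .
    also have "\<dots> = X\<^sup>T * (M * (X * M))" using as[OF XT M XM] .
    also have "M * (X * M) = M" using as[OF M X M] MXM by simp
    finally show ?thesis using F1 by simp
  qed
  have "Z * M * Z = Z"
  proof -
    have "Z * M * Z = Z * (M * Z)" using as[OF Z M Z] .
    also have "\<dots> = Z * (M * X)" unfolding MZ ..
    also have "\<dots> = (Z * M) * X" using as[OF Z M X] by simp
    also have "\<dots> = M * X * X" unfolding ZM ..
    finally show ?thesis using F1 unfolding Z_def by simp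
  qed
  then have "moore_penrose M Z" unfolding moore_penrose_def
    using Z M MZ ZM MXM PT by simp
  then show ?thesis ..
qed

lemma transpose_mult3:
  fixes A B C :: "real mat"
  assumes "A \<in> carrier_mat n n" "B \<in> carrier_mat n n" "C \<in> carrier_mat n n"
  shows "(A * B * C)\<^sup>T = C\<^sup>T * (B\<^sup>T * A\<^sup>T)"
proof -
  have "(A * B * C)\<^sup>T = C\<^sup>T * (A * B)\<^sup>T" using transpose_mult[of "A*B" n n C n] assms by auto
  also have "(A * B)\<^sup>T = B\<^sup>T * A\<^sup>T" using transpose_mult assms by blast
  finally show ?thesis .
qed

text \<open>The transpose of the pseudoinverse of a symmetric M is again a Moore-Penrose inverse
  of M, so by uniqueness it is the pseudoinverse itself.\<close>
lemma pinv_symmetric: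
  fixes M :: "real mat" assumes M: "M \<in> carrier_mat n n" and S: "M\<^sup>T = M"
  shows "pinv M \<in> carrier_mat n n" "pinv M * M * pinv M = pinv M" "(pinv M)\<^sup>T = pinv M"
proof -
  let ?X = "pinv M"
  obtain Z where "moore_penrose M Z" using moore_penrose_exists_symmetric[OF M S] ..
  then have mp: "moore_penrose M ?X" by (rule pinv_moore_penrose[OF M])
  then have Xc: "?X \<in> carrier_mat n n" and MXM: "M * ?X * M = M" and XMX: "?X * M * ?X = ?X"
    and t3: "(M * ?X)\<^sup>T = M * ?X" and t4: "(?X * M)\<^sup>T = ?X * M"
    unfolding moore_penrose_def using M by auto
  then show "?X \<in> carrier_mat n n" "?X * M * ?X = ?X" by auto
  have XT: "?X\<^sup>T \<in> carrier_mat n n" using Xc by auto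
  have a: "M * ?X\<^sup>T = ?X * M" using t4 transpose_mult[OF Xc M] S by simp
  have b: "?X\<^sup>T * M = M * ?X" using t3 transpose_mult[OF M Xc] S by simp
  have "moore_penrose M ?X\<^sup>T" unfolding moore_penrose_def
  proof (intro conjI)
    show "?X\<^sup>T \<in> carrier_mat (dim_col M) (dim_row M)" using Xc M by auto
    show "(M * ?X\<^sup>T)\<^sup>T = M * ?X\<^sup>T" using a t4 by simp
    show "(?X\<^sup>T * M)\<^sup>T = ?X\<^sup>T * M" using b t3 by simp
    show "M * ?X\<^sup>T * M = M" using transpose_mult3[OF M Xc M] MXM S assoc_mult_mat[OF M XT M] by simp
    show "?X\<^sup>T * M * ?X\<^sup>T = ?X\<^sup>T" using transpose_mult3[OF Xc M Xc] XMX S assoc_mult_mat[OF XT M XT] by simp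
  qed
  then show "?X\<^sup>T = ?X" using moore_penrose_unique[OF M] mp by blast
qed

lemma congruence_transform_symmetric:
  fixes A W :: "real mat"
  assumes A: "A \<in> carrier_mat N N" "A\<^sup>T = A" and W: "W \<in> carrier_mat N m"
  shows "W\<^sup>T * A * W \<in> carrier_mat m m" "(W\<^sup>T * A * W)\<^sup>T = W\<^sup>T * A * W"
proof -
  show "W\<^sup>T * A * W \<in> carrier_mat m m" using A W by auto
  have "(W\<^sup>T * A * W)\<^sup>T = W\<^sup>T * (W\<^sup>T * A)\<^sup>T" using transpose_mult[of "W\<^sup>T * A" m N W m] A W by auto
  also have "(W\<^sup>T * A)\<^sup>T = A\<^sup>T * W" using transpose_mult[of "W\<^sup>T" m N A N] A W by auto
  also have "W\<^sup>T * (A\<^sup>T * W) = W\<^sup>T * A * W" using A W by (simp add: assoc_mult_mat[of _ m N _ N _ m])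
  finally show "(W\<^sup>T * A * W)\<^sup>T = W\<^sup>T * A * W" .
qed

lemma galerkin_solution_energy_eq:
  fixes A W :: "real mat"
  assumes A: "A \<in> carrier_mat N N" "A\<^sup>T = A" and W: "W \<in> carrier_mat N m" and b: "b \<in> carrier_vec N"
  defines "v \<equiv> W *\<^sub>v (pinv (W\<^sup>T * A * W) *\<^sub>v (W\<^sup>T *\<^sub>v b))"
  shows "v \<in> carrier_vec N" "(A *\<^sub>v v) \<bullet> v = v \<bullet> b"
proof -
  define M where "M = W\<^sup>T * A * W"
  note MS = congruence_transform_symmetric[OF A W, folded M_def]
  define Z where "Z = pinv M"
  note Zp = pinv_symmetric[OF MS, folded Z_def]
  define y where "y = W\<^sup>T *\<^sub>v b"
  have y: "y \<in> carrier_vec m" unfolding y_def using W b by auto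
  define q where "q = Z *\<^sub>v y"
  have q: "q \<in> carrier_vec m" unfolding q_def using Zp(1) y by auto
  have vW: "v = W *\<^sub>v q" unfolding v_def q_def Z_def M_def y_def ..
  show vc: "v \<in> carrier_vec N" unfolding vW using W q by auto
  have "v \<bullet> b = b \<bullet> v" using comm_scalar_prod[OF vc b] .
  also have "\<dots> = y \<bullet> q" unfolding vW y_def using transpose_vec_mult_scalar[OF W q b] by simp
  finally have vb: "v \<bullet> b = y \<bullet> (Z *\<^sub>v y)" unfolding q_def .
  have AWq: "A *\<^sub>v (W *\<^sub>v q) \<in> carrier_vec N" using A W q by auto
  have "(A *\<^sub>v v) \<bullet> v = (W\<^sup>T *\<^sub>v (A *\<^sub>v (W *\<^sub>v q))) \<bullet> q"
    unfolding vW using transpose_vec_mult_scalar[OF W q AWq] by simp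
  also have "W\<^sup>T *\<^sub>v (A *\<^sub>v (W *\<^sub>v q)) = M *\<^sub>v q" unfolding M_def using A W q
    by (simp add: assoc_mult_mat_vec[of "W\<^sup>T" m N "A*W" m q] assoc_mult_mat_vec[of A N N W m q])
  also have "(M *\<^sub>v q) \<bullet> q = (Z\<^sup>T *\<^sub>v (M *\<^sub>v q)) \<bullet> y"
    unfolding q_def using transpose_vec_mult_scalar[OF Zp(1) y, of "M *\<^sub>v (Z *\<^sub>v y)"] MS(1) Zp(1) y
    by auto
  also have "Z\<^sup>T *\<^sub>v (M *\<^sub>v q) = (Z * M * Z) *\<^sub>v y" unfolding q_def Zp(3) using Zp(1) MS(1) y
    by (simp add: assoc_mult_mat_vec[of Z m m "M*Z" m y] assoc_mult_mat_vec[of M m m Z m y])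
  also have "\<dots> = Z *\<^sub>v y" using Zp(2) by simp
  also have "(Z *\<^sub>v y) \<bullet> y = y \<bullet> (Z *\<^sub>v y)" by (rule comm_scalar_prod[of _ m]) (use Zp(1) y in auto)
  finally show "(A *\<^sub>v v) \<bullet> v = v \<bullet> b" using vb by simp
qed

lemma Wmat_carrier: "Wmat U n N ps i \<in> carrier_mat N (n i)"
  unfolding Wmat_def by auto

lemma is_param_update:
  assumes "is_param L n ps" "i < L" "q \<in> carrier_vec (n i)"
  shows "is_param L n (ps[i := q])"
  using assms unfolding is_param_def by (auto simp: nth_list_update)

lemma multilinear_map_slot_zero:
  assumes mlin: "multilinear_map L n N U" and ps: "is_param L n ps" and i: "i < L"
  shows "U (ps[i := 0\<^sub>v (n i)]) = 0\<^sub>v N"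
proof -
  let ?z = "U (ps[i := 0\<^sub>v (n i)])"
  have zc: "?z \<in> carrier_vec N"
    using mlin is_param_update[OF ps i] unfolding multilinear_map_def by auto
  have "(-1) \<cdot>\<^sub>v 0\<^sub>v (n i) + 0\<^sub>v (n i) = (0\<^sub>v (n i) :: real vec)" by (intro eq_vecI) auto
  then have "?z = (-1) \<cdot>\<^sub>v ?z + ?z"
    using mlin ps i unfolding multilinear_map_def by (metis zero_carrier_vec)
  then have "\<forall>r < N. ?z $ r = - (?z $ r) + ?z $ r"
    using zc by (metis carrier_vecD index_add_vec(1) index_smult_vec(1) index_smult_vec(2) mult_minus1)
  then show ?thesis using zc by (intro eq_vecI) auto
qed

lemma multilinear_map_slot_eq_Wmat:
  assumes mlin: "multilinear_map L n N U" and ps: "is_param L n ps" and i: "i < L"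
    and q: "q \<in> carrier_vec (n i)"
  shows "U (ps[i := q]) = Wmat U n N ps i *\<^sub>v q"
proof -
  have lin: "\<And>x y a. x \<in> carrier_vec (n i) \<Longrightarrow> y \<in> carrier_vec (n i) \<Longrightarrow>
        U (ps[i := a \<cdot>\<^sub>v x + y]) = a \<cdot>\<^sub>v U (ps[i := x]) + U (ps[i := y])"
    using mlin ps i unfolding multilinear_map_def by blast
  have Uc: "\<And>x. x \<in> carrier_vec (n i) \<Longrightarrow> U (ps[i := x]) \<in> carrier_vec N"
    using mlin is_param_update[OF ps i] unfolding multilinear_map_def by blast
  define s where "s k = vec (n i) (\<lambda>j. if j < k then q$j else 0)" for k
  have "k \<le> n i \<Longrightarrow> U (ps[i := s k]) = vec N (\<lambda>r. \<Sum>c<k. Wmat U n N ps i $$ (r,c) * q$c)" for k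
  proof (induction k)
    case 0
    have "s 0 = 0\<^sub>v (n i)" unfolding s_def by (intro eq_vecI) auto
    then show ?case using multilinear_map_slot_zero[OF mlin ps i] by (intro eq_vecI) auto
  next
    case (Suc k)
    then have k: "k < n i" by auto
    have sS: "s (Suc k) = q$k \<cdot>\<^sub>v unit_vec (n i) k + s k" unfolding s_def
      by (intro eq_vecI) (auto simp: unit_vec_def less_Suc_eq)
    have "U (ps[i := s (Suc k)]) = q$k \<cdot>\<^sub>v U (ps[i := unit_vec (n i) k]) + U (ps[i := s k])"
      unfolding sS by (rule lin) (auto simp: s_def)
    also have "\<dots> = vec N (\<lambda>r. \<Sum>c<Suc k. Wmat U n N ps i $$ (r,c) * q$c)"
      unfolding Suc.IH[OF less_imp_le[OF k]]
      using Uc[of "unit_vec (n i) k"] k by (intro eq_vecI) (auto simp: Wmat_def)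
    finally show ?case .
  qed
  moreover have "s (n i) = q" unfolding s_def using q by (intro eq_vecI) auto
  ultimately have "U (ps[i := q]) = vec N (\<lambda>r. \<Sum>c<n i. Wmat U n N ps i $$ (r,c) * q$c)" by force
  also have "\<dots> = Wmat U n N ps i *\<^sub>v q"
    using q Wmat_carrier[of U n N ps i]
    by (intro eq_vecI) (auto simp: mult_mat_vec_def scalar_prod_def atLeast0LessThan mult.commute intro!: sum.cong)
  finally show ?thesis .
qed

lemma is_param_als_update:
  assumes A: "A \<in> carrier_mat N N" "A\<^sup>T = A" and b: "b \<in> carrier_vec N"
    and ps: "is_param L n ps" and i: "i < L"
  shows "is_param L n (als_update U n N A b ps i)"
proof -
  let ?W = "Wmat U n N ps i"
  have W: "?W \<in> carrier_mat N (n i)" by (rule Wmat_carrier)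
  have "pinv (?W\<^sup>T * A * ?W) \<in> carrier_mat (n i) (n i)"
    using pinv_symmetric(1)[OF congruence_transform_symmetric[OF A W]] .
  then have "pinv (?W\<^sup>T * A * ?W) *\<^sub>v (?W\<^sup>T *\<^sub>v b) \<in> carrier_vec (n i)" using W b by auto
  then show ?thesis unfolding als_update_def Let_def using is_param_update[OF ps i] by auto
qed

lemma is_param_partial_sweep:
  assumes A: "A \<in> carrier_mat N N" "A\<^sup>T = A" and b: "b \<in> carrier_vec N"
    and ps: "is_param L n ps" and k: "k \<le> L"
  shows "is_param L n (partial_sweep U n N A b ps k)"
  using k by (induction k) (use ps is_param_als_update[OF A b] in auto)

lemma is_param_als_param:
  assumes A: "A \<in> carrier_mat N N" "A\<^sup>T = A" and b: "b \<in> carrier_vec N"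
    and p1: "is_param L n p1"
  shows "is_param L n (als_param L U n N A b p1 k)"
proof -
  have "is_param L n (((\<lambda>ps. partial_sweep U n N A b ps L) ^^ j) p1)" for j
    by (induction j) (use p1 is_param_partial_sweep[OF A b] in auto)
  then show ?thesis unfolding als_param_def by blast
qed

lemma als_update_energy_eq:
  assumes A: "A \<in> carrier_mat N N" "A\<^sup>T = A" and b: "b \<in> carrier_vec N"
    and mlin: "multilinear_map L n N U" and ps: "is_param L n ps" and i: "i < L"
  defines "v \<equiv> U (als_update U n N A b ps i)"
  shows "v \<in> carrier_vec N" "(A *\<^sub>v v) \<bullet> v = v \<bullet> b"
proof -
  let ?W = "Wmat U n N ps i"
  let ?q = "pinv (?W\<^sup>T * A * ?W) *\<^sub>v (?W\<^sup>T *\<^sub>v b)"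
  have "?q \<in> carrier_vec (n i)"
    using pinv_symmetric(1)[OF congruence_transform_symmetric[OF A Wmat_carrier[of U n N ps i]]]
      Wmat_carrier[of U n N ps i] b
    by auto
  then have "v = ?W *\<^sub>v ?q"
    unfolding v_def als_update_def Let_def by (rule multilinear_map_slot_eq_Wmat[OF mlin ps i])
  then show "v \<in> carrier_vec N" "(A *\<^sub>v v) \<bullet> v = v \<bullet> b"
    using galerkin_solution_energy_eq[OF A Wmat_carrier b] by simp_all
qed

lemma energy_of_galerkin_solution:
  assumes A: "A \<in> carrier_mat N N" and pos: "(A *\<^sub>v v) \<bullet> v \<ge> 0"
    and v: "v \<in> carrier_vec N" and b: "b \<in> carrier_vec N" and eq: "(A *\<^sub>v v) \<bullet> v = v \<bullet> b"
  shows "energy A b v = - (1 / (2 * (b \<bullet> b))) * (v \<bullet> b)" "(A_norm A v)\<^sup>2 = v \<bullet> b"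
proof -
  have "b \<bullet> v = v \<bullet> b" using comm_scalar_prod[OF b v] .
  then show "energy A b v = - (1 / (2 * (b \<bullet> b))) * (v \<bullet> b)"
    unfolding energy_def eq by (simp add: field_simps)
  show "(A_norm A v)\<^sup>2 = v \<bullet> b" unfolding A_norm_def using pos eq by simp
qed

theorem mainTheorem9:
  fixes d L N :: nat and m n :: "nat \<Rightarrow> nat"
    and A :: "real mat" and b :: "real vec"
    and U :: "real vec list \<Rightarrow> real vec" and p1 :: "real vec list"
  assumes "N = (\<Prod>\<nu>\<in>{1..d}. m \<nu>)"
    and "L \<ge> d"
    and "A \<in> carrier_mat N N" and "transpose_mat A = A"
    and "\<forall>v \<in> carrier_vec N. v \<noteq> 0\<^sub>v N \<longrightarrow> (A *\<^sub>v v) \<bullet> v > 0"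
    and "b \<in> carrier_vec N" and "b \<noteq> 0\<^sub>v N"
    and "multilinear_map L n N U"
    and "is_param L n p1"
  shows "\<forall>k \<ge> 1. \<forall>\<mu> \<in> {1..L}.
           (let v = als_iterate L U n N A b p1 k \<mu> in
              energy A b v = - (1 / (2 * (b \<bullet> b))) * (v \<bullet> b) \<and>
              - (1 / (2 * (b \<bullet> b))) * (v \<bullet> b) = - (1 / (2 * (b \<bullet> b))) * (A_norm A v)\<^sup>2)"
proof (intro allI impI ballI)
  fix k \<mu> :: nat assume "1 \<le> k" and \<mu>: "\<mu> \<in> {1..L}"
  note A = assms(3,4) and b = assms(6)
  define ps where "ps = partial_sweep U n N A b (als_param L U n N A b p1 k) (\<mu> - 1)"
  have ps: "is_param L n ps"
    unfolding ps_def using \<mu> by (intro is_param_partial_sweep[OF A b is_param_als_param[OF A b assms(9)]]) auto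
  have "\<mu> = Suc (\<mu> - 1)" using \<mu> by auto
  then have v_eq: "als_iterate L U n N A b p1 k \<mu> = U (als_update U n N A b ps (\<mu> - 1))"
    unfolding als_iterate_def ps_def by (metis partial_sweep.simps(2))
  define v where "v = als_iterate L U n N A b p1 k \<mu>"
  have v: "v \<in> carrier_vec N" and eq: "(A *\<^sub>v v) \<bullet> v = v \<bullet> b"
    using als_update_energy_eq[OF A b assms(8) ps] \<mu> unfolding v_def v_eq by auto
  have "(A *\<^sub>v v) \<bullet> v \<ge> 0"
    using assms(5) v A by (cases "v = 0\<^sub>v N") (auto simp: less_imp_le)
  from energy_of_galerkin_solution[OF assms(3) this v b eq]
  show "let v = als_iterate L U n N A b p1 k \<mu> in
          energy A b v = - (1 / (2 * (b \<bullet> b))) * (v \<bullet> b) \<and>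
          - (1 / (2 * (b \<bullet> b))) * (v \<bullet> b) = - (1 / (2 * (b \<bullet> b))) * (A_norm A v)\<^sup>2"
    unfolding v_def Let_def by simp
qed
end
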